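(* Let $k$ be a positive integer. (a) For the Petersen graph $\mathcal{P}$, $\dim_{k,f}(\mathcal{P})=\frac{5}{3}$. (b) For $n \ge 3$, $\dim_{k,f}(C_n+K_1)=2$ if $n \in \{3,4\}$, $\dim_{k,f}(C_n+K_1)=\frac{3}{2}$ if $n=5$, and $\dim_{k,f}(C_n+K_1)=\frac{n}{4}$ if $n\ge 6$. (c) For $m \ge 2$, let $G=K_{a_1, a_2, \ldots, a_m}$ be a complete $m$-partite graph of order $n=\sum_{i=1}^{m}a_i$, and let $s$ be the number of partite sets of $G$ consisting of exactly one element. Then $\dim_{k,f}(G)=\frac{n-1}{2}$ if $s=1$, and $\dim_{k,f}(G)=\frac{n}{2}$ otherwise.
   Context: $C_n$ is the cycle on $n$ vertices, $K_1$ a single vertex, and $G+H$ denotes the join (disjoint union plus all edges between the two graphs). $d(x,y)$ is the distance in $G$. For a positive integer $k$, $d_k(x,y)=\min\{d(x,y),k+1\}$ and $R_k\{x,y\}=\{z\in V(G): d_k(x,z)\neq d_k(y,z)\}$. For a function $g$ on $V(G)$ and $U\subseteq V(G)$, $g(U)=\sum_{s\in U}g(s)$. A function $h:V(G)\to[0,1]$ is a $k$-truncated resolving function of $G$ if $h(R_k\{x,y\})\ge 1$ for all distinct $x,y\in V(G)$; $\dim_{k,f}(G)$ is the minimum of $h(V(G))$ over all such $h$. *)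

theory Defs
  imports "HOL-Analysis.Analysis"
begin

text \<open>A graph is given by a vertex set V and a symmetric irreflexive adjacency
relation E (only its restriction to V matters).\<close>

fun walkn :: "'a set \<Rightarrow> ('a \<Rightarrow> 'a \<Rightarrow> bool) \<Rightarrow> nat \<Rightarrow> 'a \<Rightarrow> 'a \<Rightarrow> bool" where
  "walkn V E 0 x y = (x = y \<and> x \<in> V)"
| "walkn V E (Suc n) x y = (x \<in> V \<and> (\<exists>z\<in>V. E x z \<and> walkn V E n z y))"

definition gdist :: "'a set \<Rightarrow> ('a \<Rightarrow> 'a \<Rightarrow> bool) \<Rightarrow> 'a \<Rightarrow> 'a \<Rightarrow> enat" where
  "gdist V E x y = (if \<exists>n. walkn V E n x y then enat (LEAST n. walkn V E n x y) else \<infinity>)"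

definition tdist :: "nat \<Rightarrow> 'a set \<Rightarrow> ('a \<Rightarrow> 'a \<Rightarrow> bool) \<Rightarrow> 'a \<Rightarrow> 'a \<Rightarrow> enat" where
  "tdist k V E x y = min (gdist V E x y) (enat (k + 1))"

definition Rk :: "nat \<Rightarrow> 'a set \<Rightarrow> ('a \<Rightarrow> 'a \<Rightarrow> bool) \<Rightarrow> 'a \<Rightarrow> 'a \<Rightarrow> 'a set" where
  "Rk k V E x y = {z \<in> V. tdist k V E x z \<noteq> tdist k V E y z}"

definition trunc_resolving_fn :: "nat \<Rightarrow> 'a set \<Rightarrow> ('a \<Rightarrow> 'a \<Rightarrow> bool) \<Rightarrow> ('a \<Rightarrow> real) \<Rightarrow> bool" where
  "trunc_resolving_fn k V E h \<longleftrightarrow>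
     (\<forall>v\<in>V. 0 \<le> h v \<and> h v \<le> 1) \<and>
     (\<forall>x\<in>V. \<forall>y\<in>V. x \<noteq> y \<longrightarrow> sum h (Rk k V E x y) \<ge> 1)"

definition frac_tdim :: "nat \<Rightarrow> 'a set \<Rightarrow> ('a \<Rightarrow> 'a \<Rightarrow> bool) \<Rightarrow> real" where
  "frac_tdim k V E = Inf {sum h V | h. trunc_resolving_fn k V E h}"

text \<open>Petersen graph as the Kneser graph K(5,2).\<close>
definition petersen_V :: "nat set set" where
  "petersen_V = {S. S \<subseteq> {0..<5} \<and> card S = 2}"
definition petersen_E :: "nat set \<Rightarrow> nat set \<Rightarrow> bool" where
  "petersen_E S T \<longleftrightarrow> S \<in> petersen_V \<and> T \<in> petersen_V \<and> S \<inter> T = {}"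

text \<open>Wheel C_n + K_1: cycle on 0..n-1, hub vertex n.\<close>
definition wheel_V :: "nat \<Rightarrow> nat set" where
  "wheel_V n = {0..n}"
definition wheel_E :: "nat \<Rightarrow> nat \<Rightarrow> nat \<Rightarrow> bool" where
  "wheel_E n i j \<longleftrightarrow>
     (i < n \<and> j < n \<and> (j = (i + 1) mod n \<or> i = (j + 1) mod n) \<and> i \<noteq> j)
   \<or> (i = n \<and> j < n) \<or> (j = n \<and> i < n)"

text \<open>Complete m-partite graph K_{a_0,...,a_{m-1}}: vertex (i,j) is the j-th vertex of part i.\<close>
definition cmp_V :: "nat \<Rightarrow> (nat \<Rightarrow> nat) \<Rightarrow> (nat \<times> nat) set" where
  "cmp_V m a = {(i, j). i < m \<and> j < a i}"
definition cmp_E :: "nat \<Rightarrow> (nat \<Rightarrow> nat) \<Rightarrow> nat \<times> nat \<Rightarrow> nat \<times> nat \<Rightarrow> bool" where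
  "cmp_E m a u v \<longleftrightarrow> u \<in> cmp_V m a \<and> v \<in> cmp_V m a \<and> fst u \<noteq> fst v"

end

theory Submission
  imports Defs
begin

(* For k >= 1 truncation is invisible in a graph of diameter at most 2, where
   R{x,y} = {x,y} \<union> (N(x) \<triangle> N(y)).  All graphs in question have diameter 2, so
   dim_{k,f} is the value of a linear program over these sets.  Upper bounds come from
   weights 1/c on a set S meeting every R{x,y} in at least c vertices.  Lower bounds
   come from weak LP duality (double counting over a weighted family of pairs) or,
   for complete multipartite graphs, from twins: if R{u,v} = {u,v} then
   h u + h v >= 1, so a class of t >= 2 mutual twins carries weight at least t/2;
   only a lone singleton part escapes this, which costs exactly 1/2.
   For the wheels with n >= 6 the consecutive rim pairs give the dual bound n/4, and
   every pair is resolved by four rim vertices; the Petersen graph and the wheels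
   with n <= 5 are settled by explicit primal and dual certificates. *)

definition diam_le_2 :: "'a set \<Rightarrow> ('a \<Rightarrow> 'a \<Rightarrow> bool) \<Rightarrow> bool" where
  "diam_le_2 V E \<longleftrightarrow> (\<forall>x\<in>V. \<forall>y\<in>V. x \<noteq> y \<longrightarrow> \<not> E x y \<longrightarrow> (\<exists>z\<in>V. E x z \<and> E z y))"

lemma gdist_diam_le_2:
  assumes "diam_le_2 V E" "x \<in> V" "y \<in> V"
  shows "gdist V E x y = (if x = y then 0 else if E x y then 1 else 2)"
proof -
  have walk0: "walkn V E 0 x y \<longleftrightarrow> x = y"
    and walk1: "walkn V E 1 x y \<longleftrightarrow> E x y"
    and walk2: "walkn V E 2 x y \<longleftrightarrow> (\<exists>z\<in>V. E x z \<and> E z y)"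
    using assms(2,3) by (auto simp: numeral_2_eq_2)
  have least: "gdist V E x y = enat d" if "walkn V E d x y" "\<forall>n<d. \<not> walkn V E n x y" for d
  proof -
    have "(LEAST n. walkn V E n x y) = d"
      using that by (metis Least_equality not_less)
    with that(1) show ?thesis by (auto simp: gdist_def)
  qed
  consider "x = y" | "x \<noteq> y" "E x y" | "x \<noteq> y" "\<not> E x y" by blast
  then show ?thesis
  proof cases
    case 1
    then show ?thesis using least[of 0] walk0 by (simp add: zero_enat_def)
  next
    case 2
    then show ?thesis using least[of 1] walk0 walk1 by (simp add: one_enat_def)
  next
    case 3
    with assms have "walkn V E 2 x y" unfolding walk2 diam_le_2_def by blast
    then show ?thesis using 3 least[of 2] walk0 walk1 by (simp add: numeral_eq_enat less_2_cases_iff)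
  qed
qed

lemma Rk_diam_le_2:
  assumes "k \<ge> 1" "diam_le_2 V E" "x \<in> V" "y \<in> V" "x \<noteq> y"
  shows "Rk k V E x y = {x, y} \<union> {z \<in> V. E x z \<noteq> E y z}"
proof -
  have "tdist k V E u z = enat (if u = z then 0 else if E u z then 1 else 2)" if "u \<in> V" "z \<in> V" for u z
    using gdist_diam_le_2[OF assms(2) that] assms(1)
    by (simp add: tdist_def numeral_eq_enat one_enat_def zero_enat_def)
  then have "tdist k V E x z \<noteq> tdist k V E y z \<longleftrightarrow> z \<in> {x, y} \<or> E x z \<noteq> E y z"
    if "z \<in> V" for z
    using assms(3-5) that by auto
  with assms(3,4) show ?thesis by (auto simp: Rk_def)
qed

lemma Rk_subset: "Rk k V E x y \<subseteq> V"
  by (auto simp: Rk_def)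

lemma Rk_commute: "Rk k V E x y = Rk k V E y x"
  by (auto simp: Rk_def)

lemma gdist_eq_0_iff:
  assumes "x \<in> V"
  shows "gdist V E x y = 0 \<longleftrightarrow> x = y"
proof
  assume "gdist V E x y = 0"
  then obtain n where "walkn V E n x y" "(LEAST n. walkn V E n x y) = 0"
    by (auto simp: gdist_def zero_enat_def split: if_splits)
  then have "walkn V E 0 x y" by (metis LeastI)
  then show "x = y" by simp
next
  assume "x = y"
  with assms have walk: "walkn V E 0 x y" by simp
  then have "\<exists>n. walkn V E n x y" "(LEAST n. walkn V E n x y) = 0"
    by (blast, rule Least_eq_0)
  then show "gdist V E x y = 0" by (simp add: gdist_def zero_enat_def)
qed

lemma tdist_eq_0_iff: "x \<in> V \<Longrightarrow> tdist k V E x y = 0 \<longleftrightarrow> x = y"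
  using gdist_eq_0_iff[of x V E y] by (auto simp: tdist_def min_def enat_0_iff)

lemma endpoints_mem_Rk:
  assumes "x \<in> V" "y \<in> V" "x \<noteq> y"
  shows "{x, y} \<subseteq> Rk k V E x y"
proof -
  have "tdist k V E x x = 0" "tdist k V E y y = 0" "tdist k V E x y \<noteq> 0" "tdist k V E y x \<noteq> 0"
    using assms by (simp_all add: tdist_eq_0_iff)
  with assms show ?thesis by (auto simp: Rk_def)
qed

lemma trunc_resolving_fn_nonneg: "trunc_resolving_fn k V E h \<Longrightarrow> z \<in> V \<Longrightarrow> 0 \<le> h z"
  by (simp add: trunc_resolving_fn_def)

lemma trunc_resolving_fn_Rk:
  "trunc_resolving_fn k V E h \<Longrightarrow> x \<in> V \<Longrightarrow> y \<in> V \<Longrightarrow> x \<noteq> y \<Longrightarrow> 1 \<le> sum h (Rk k V E x y)"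
  by (simp add: trunc_resolving_fn_def)

lemma frac_tdim_eqI:
  assumes "trunc_resolving_fn k V E h" "sum h V = d"
    and "\<And>h. trunc_resolving_fn k V E h \<Longrightarrow> d \<le> sum h V"
  shows "frac_tdim k V E = d"
  unfolding frac_tdim_def by (rule cInf_eq_minimum) (use assms in auto)

lemma walkn_cong:
  "(\<And>x y. x \<in> V \<Longrightarrow> y \<in> V \<Longrightarrow> E x y = E' x y) \<Longrightarrow> walkn V E n x y = walkn V E' n x y"
  by (induction n arbitrary: x) auto

lemma frac_tdim_cong:
  assumes "\<And>x y. x \<in> V \<Longrightarrow> y \<in> V \<Longrightarrow> E x y = E' x y"
  shows "frac_tdim k V E = frac_tdim k V E'"
  by (simp add: frac_tdim_def trunc_resolving_fn_def Rk_def tdist_def gdist_def walkn_cong[OF assms])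

lemma trunc_resolving_fn_uniform:
  fixes c :: real
  assumes "finite V" "S \<subseteq> V" "c \<ge> 1"
    and "\<And>x y. x \<in> V \<Longrightarrow> y \<in> V \<Longrightarrow> x \<noteq> y \<Longrightarrow> c \<le> card (Rk k V E x y \<inter> S)"
  shows "trunc_resolving_fn k V E (\<lambda>z. if z \<in> S then 1 / c else 0)"
  unfolding trunc_resolving_fn_def
proof (intro conjI ballI impI)
  fix x y assume xy: "x \<in> V" "y \<in> V" "x \<noteq> y"
  have "finite (Rk k V E x y)" using assms(1) Rk_subset by (rule finite_subset[rotated])
  then have "(\<Sum>z\<in>Rk k V E x y. if z \<in> S then 1 / c else 0) = card (Rk k V E x y \<inter> S) / c"
    by (simp add: sum.If_cases)
  with assms(3) assms(4)[OF xy] show "1 \<le> (\<Sum>z\<in>Rk k V E x y. if z \<in> S then 1 / c else 0)"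
    by simp
qed (use assms(3) in auto)

lemma sum_uniform_weight: "finite V \<Longrightarrow> S \<subseteq> V \<Longrightarrow> sum (\<lambda>z. if z \<in> S then 1 / c else 0) V = card S / c"
  by (simp add: sum.If_cases Int_absorb1)

lemma distinct_length_le_card: "finite A \<Longrightarrow> set xs \<subseteq> A \<Longrightarrow> distinct xs \<Longrightarrow> length xs \<le> card A"
  by (metis card_mono distinct_card)

lemma two_le_card: "finite A \<Longrightarrow> {x, y} \<subseteq> A \<Longrightarrow> x \<noteq> y \<Longrightarrow> 2 \<le> card A"
  using card_mono[of A "{x, y}"] by simp

lemma trunc_resolving_fn_half:
  assumes "finite V"
  shows "trunc_resolving_fn k V E (\<lambda>z. if z \<in> V then 1 / 2 else 0)"
proof (rule trunc_resolving_fn_uniform)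
  fix x y assume "x \<in> V" "y \<in> V" "x \<noteq> y"
  then have "{x, y} \<subseteq> Rk k V E x y \<inter> V" using endpoints_mem_Rk[of x V y k E] by simp
  with assms \<open>x \<noteq> y\<close> show "2 \<le> real (card (Rk k V E x y \<inter> V))"
    using two_le_card[of "Rk k V E x y \<inter> V" x y] by simp
qed (use assms in auto)

lemma sum_ge_half_card_if_pairwise:
  fixes f :: "'a \<Rightarrow> real"
  assumes "finite A" "card A \<noteq> 1"
    and pair: "\<And>x y. x \<in> A \<Longrightarrow> y \<in> A \<Longrightarrow> x \<noteq> y \<Longrightarrow> 1 \<le> f x + f y"
  shows "card A / 2 \<le> sum f A"
proof (cases "\<forall>x\<in>A. 1 / 2 \<le> f x")
  case True
  then have "sum (\<lambda>_. 1 / 2) A \<le> sum f A" by (intro sum_mono) auto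
  then show ?thesis by simp
next
  case False
  then obtain x0 where x0: "x0 \<in> A" "f x0 < 1 / 2" by auto
  with assms(1,2) have card_A: "card A \<ge> 2"
    by (metis One_nat_def card_0_eq empty_iff less_2_cases not_le)
  \<comment> \<open>every other element carries at least \<open>1 - f x0 > 1/2\<close>\<close>
  have "sum (\<lambda>_. 1 - f x0) (A - {x0}) \<le> sum f (A - {x0})"
    using pair x0(1) by (intro sum_mono) (smt (verit) DiffE insertI1)
  moreover have "sum f A = f x0 + sum f (A - {x0})"
    using assms(1) x0(1) by (simp add: sum.remove)
  moreover have "card (A - {x0}) = card A - 1" using assms(1) x0(1) by simp
  ultimately have "f x0 + (real (card A) - 1) * (1 - f x0) \<le> sum f A"
    using card_A by (simp add: of_nat_diff)
  moreover have "0 \<le> (real (card A) - 2) * (1 / 2 - f x0)"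
    using card_A x0(2) by simp
  ultimately show ?thesis by (simp add: algebra_simps)
qed

lemma trunc_resolving_fn_twins:
  assumes "trunc_resolving_fn k V E h" "x \<in> V" "y \<in> V" "x \<noteq> y" "Rk k V E x y \<subseteq> {x, y}"
  shows "1 \<le> h x + h y"
proof -
  have "1 \<le> sum h (Rk k V E x y)" using assms(1-4) by (rule trunc_resolving_fn_Rk)
  also have "\<dots> \<le> sum h {x, y}"
    using assms by (intro sum_mono2) (auto simp: trunc_resolving_fn_nonneg)
  finally show ?thesis using assms(4) by simp
qed

lemma trunc_resolving_fn_double_counting:
  fixes h :: "'a \<Rightarrow> real" and w :: "'a \<times> 'a \<Rightarrow> nat"
  assumes h: "trunc_resolving_fn k V E h" and "finite V" "finite P"
    and P: "\<And>x y. (x, y) \<in> P \<Longrightarrow> x \<in> V \<and> y \<in> V \<and> x \<noteq> y"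
    and Q: "\<And>x y. (x, y) \<in> P \<Longrightarrow> Rk k V E x y \<subseteq> Q x y"
    and cover: "\<And>z. z \<in> V \<Longrightarrow> (\<Sum>p\<in>{p \<in> P. z \<in> Q (fst p) (snd p)}. w p) \<le> m"
  shows "(\<Sum>p\<in>P. w p) \<le> m * sum h V"
proof -
  let ?Q = "\<lambda>p. Q (fst p) (snd p)"
  have nonneg: "\<And>z. z \<in> V \<Longrightarrow> 0 \<le> h z" using h by (rule trunc_resolving_fn_nonneg)
  have "1 \<le> (\<Sum>z\<in>V. if z \<in> ?Q p then h z else 0)" if "p \<in> P" for p
  proof -
    obtain x y where p: "p = (x, y)" by fastforce
    have "1 \<le> sum h (Rk k V E x y)" using h P[of x y] that p by (auto intro: trunc_resolving_fn_Rk)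
    also have "\<dots> \<le> sum h (V \<inter> Q x y)"
      using Q[of x y] Rk_subset[of k V E x y] that p \<open>finite V\<close> nonneg by (intro sum_mono2) auto
    finally show ?thesis using \<open>finite V\<close> p by (simp add: sum.If_cases)
  qed
  then have "(\<Sum>p\<in>P. real (w p)) \<le> (\<Sum>p\<in>P. w p * (\<Sum>z\<in>V. if z \<in> ?Q p then h z else 0))"
    by (intro sum_mono) (simp add: mult_le_cancel_left1)
  also have "\<dots> = (\<Sum>p\<in>P. \<Sum>z\<in>V. if z \<in> ?Q p then h z * w p else 0)"
    by (simp add: sum_distrib_left) (intro sum.cong refl; simp)
  also have "\<dots> = (\<Sum>z\<in>V. \<Sum>p\<in>P. if z \<in> ?Q p then h z * w p else 0)"
    by (rule sum.swap)
  also have "\<dots> = (\<Sum>z\<in>V. h z * (\<Sum>p\<in>{p \<in> P. z \<in> ?Q p}. real (w p)))"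
    by (simp add: sum.inter_filter[symmetric] \<open>finite P\<close> sum_distrib_left)
  also have "\<dots> \<le> (\<Sum>z\<in>V. h z * m)"
    using cover nonneg by (intro sum_mono mult_left_mono) (simp_all flip: of_nat_sum)
  finally show ?thesis by (simp add: sum_distrib_left mult.commute)
qed

(* Vertices and pairs are given as lists so that, for an explicit graph, every hypothesis
   can be checked by evaluation. *)
lemma frac_tdim_diam_le_2_certificate:
  fixes vs :: "'a list" and ps :: "('a \<times> 'a) list" and w :: "'a \<times> 'a \<Rightarrow> nat" and c m :: nat
  assumes k: "k \<ge> 1" and diam: "diam_le_2 (set vs) E" and "S \<subseteq> set vs" "c \<ge> 1" "m \<ge> 1"
    and primal: "\<forall>x\<in>set vs. \<forall>y\<in>set vs. x \<noteq> y \<longrightarrow>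
      c \<le> card (({x, y} \<union> {z \<in> set vs. E x z \<noteq> E y z}) \<inter> S)"
    and pairs: "\<forall>(x, y)\<in>set ps. x \<in> set vs \<and> y \<in> set vs \<and> x \<noteq> y"
    and dual: "\<forall>z\<in>set vs. (\<Sum>p\<in>{(x, y) \<in> set ps. z \<in> {x, y} \<or> E x z \<noteq> E y z}. w p) \<le> m"
    and equal: "(\<Sum>p\<in>set ps. w p) * c = m * card S"
  shows "frac_tdim k (set vs) E = card S / c"
proof (rule frac_tdim_eqI)
  show "trunc_resolving_fn k (set vs) E (\<lambda>z. if z \<in> S then 1 / c else 0)"
    using \<open>S \<subseteq> set vs\<close> \<open>c \<ge> 1\<close> primal
    by (intro trunc_resolving_fn_uniform) (simp_all add: Rk_diam_le_2[OF k diam] of_nat_le_iff)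
  show "(\<Sum>z\<in>set vs. if z \<in> S then 1 / c else 0) = card S / c"
    using \<open>S \<subseteq> set vs\<close> by (simp add: sum_uniform_weight)
next
  fix h assume h: "trunc_resolving_fn k (set vs) E h"
  define Q where "Q x y = {x, y} \<union> {z \<in> set vs. E x z \<noteq> E y z}" for x y
  have "{p \<in> set ps. z \<in> Q (fst p) (snd p)} = {(x, y) \<in> set ps. z \<in> {x, y} \<or> E x z \<noteq> E y z}"
    if "z \<in> set vs" for z
    using that by (auto simp: Q_def)
  then have "(\<Sum>p\<in>set ps. w p) \<le> m * sum h (set vs)"
    using pairs dual by (intro trunc_resolving_fn_double_counting[OF h, where Q = Q])
      (auto simp: Q_def Rk_diam_le_2[OF k diam])
  moreover have "real (\<Sum>p\<in>set ps. w p) = m * (card S / c)"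
    using arg_cong[OF equal, of real] \<open>c \<ge> 1\<close> by (simp add: field_simps)
  ultimately have "real m * (card S / c) \<le> m * sum h (set vs)" by simp
  then show "card S / c \<le> sum h (set vs)"
    by (rule mult_left_le_imp_le) (use \<open>m \<ge> 1\<close> in simp)
qed

lemma petersen_V_eq:
  "petersen_V = {{0,1}, {0,2}, {0,3}, {0,4}, {1,2}, {1,3}, {1,4}, {2,3}, {2,4}, {3,4}}"
proof
  show "petersen_V \<subseteq> {{0,1}, {0,2}, {0,3}, {0,4}, {1,2}, {1,3}, {1,4}, {2,3}, {2,4}, {3,4}}"
  proof
    fix S assume "S \<in> petersen_V"
    then obtain a b where "S = {a, b}" "a \<noteq> b" "a < 5" "b < 5"
      unfolding petersen_V_def by (auto simp: card_2_iff)
    moreover from \<open>a < 5\<close> \<open>b < 5\<close> have "a \<in> {0,1,2,3,4}" "b \<in> {0,1,2,3,4}" by auto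
    ultimately show "S \<in> {{0,1}, {0,2}, {0,3}, {0,4}, {1,2}, {1,3}, {1,4}, {2,3}, {2,4}, {3,4}}"
      by (simp add: doubleton_eq_iff) (elim disjE; simp)
  qed
qed (auto simp: petersen_V_def)

lemma frac_tdim_petersen:
  assumes "k \<ge> 1"
  shows "frac_tdim k petersen_V petersen_E = 5 / 3"
proof -
  define vs :: "nat set list" where "vs = [{0,1}, {0,2}, {0,3}, {0,4}, {1,2}, {1,3}, {1,4}, {2,3}, {2,4}, {3,4}]"
  have V: "petersen_V = set vs" by (simp add: vs_def petersen_V_eq)
  \<comment> \<open>every \<open>R{S,T}\<close> has 6 elements, so by vertex transitivity each vertex lies in 54 of the 90 sets\<close>
  have "frac_tdim k (set vs) (\<lambda>S T. S \<inter> T = {}) = card (set vs) / real 6"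
    by (rule frac_tdim_diam_le_2_certificate[OF assms,
          where ps = "[(S, T). S \<leftarrow> vs, T \<leftarrow> vs, S \<noteq> T]" and w = "\<lambda>_. 1" and m = 54];
        (unfold vs_def)?; code_simp)
  moreover have "card (set vs) = 10" unfolding vs_def by code_simp
  moreover have "frac_tdim k petersen_V petersen_E = frac_tdim k petersen_V (\<lambda>S T. S \<inter> T = {})"
    by (rule frac_tdim_cong) (simp add: petersen_E_def)
  ultimately show ?thesis by (simp add: V)
qed

definition cyc_succ :: "nat \<Rightarrow> nat \<Rightarrow> nat" where
  "cyc_succ n i = (if Suc i = n then 0 else Suc i)"

definition cyc_pred :: "nat \<Rightarrow> nat \<Rightarrow> nat" where
  "cyc_pred n i = (if i = 0 then n - 1 else i - 1)"

definition cyc_nbrs :: "nat \<Rightarrow> nat \<Rightarrow> nat set" where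
  "cyc_nbrs n i = {cyc_succ n i, cyc_pred n i}"

lemma cyc_succ_lt: "i < n \<Longrightarrow> cyc_succ n i < n"
  and cyc_pred_lt: "i < n \<Longrightarrow> cyc_pred n i < n"
  by (auto simp: cyc_succ_def cyc_pred_def)

lemma cyc_pred_succ: "i < n \<Longrightarrow> cyc_pred n (cyc_succ n i) = i"
  and cyc_succ_pred: "i < n \<Longrightarrow> cyc_succ n (cyc_pred n i) = i"
  by (auto simp: cyc_succ_def cyc_pred_def)

lemma cyc_succ_neq: "n \<ge> 2 \<Longrightarrow> i < n \<Longrightarrow> cyc_succ n i \<noteq> i"
  by (simp add: cyc_succ_def)

lemma cyc_succ_inj: "i < n \<Longrightarrow> j < n \<Longrightarrow> cyc_succ n i = cyc_succ n j \<longleftrightarrow> i = j"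
  and cyc_pred_inj: "i < n \<Longrightarrow> j < n \<Longrightarrow> cyc_pred n i = cyc_pred n j \<longleftrightarrow> i = j"
  by (auto simp: cyc_succ_def cyc_pred_def)

lemma cyc_nbrs_lt: "x < n \<Longrightarrow> z \<in> cyc_nbrs n x \<Longrightarrow> z < n"
  and self_notin_cyc_nbrs: "n \<ge> 3 \<Longrightarrow> x < n \<Longrightarrow> x \<notin> cyc_nbrs n x"
  by (auto simp: cyc_nbrs_def cyc_succ_def cyc_pred_def)

lemma cyc_succ_4_neq: "n \<ge> 5 \<Longrightarrow> x < n \<Longrightarrow> cyc_succ n (cyc_succ n (cyc_succ n (cyc_succ n x))) \<noteq> x"
  by (simp add: cyc_succ_def)

lemma cyc_nbrs_not_subset:
  assumes "n \<ge> 5" "x < n" "y < n" "x \<noteq> y"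
  shows "\<not> cyc_nbrs n x \<subseteq> cyc_nbrs n y"
proof
  assume "cyc_nbrs n x \<subseteq> cyc_nbrs n y"
  then have "cyc_succ n x \<in> cyc_nbrs n y" "cyc_pred n x \<in> cyc_nbrs n y"
    by (simp_all add: cyc_nbrs_def)
  moreover have "cyc_succ n x \<noteq> cyc_succ n y" "cyc_pred n x \<noteq> cyc_pred n y"
    using assms(2-4) by (simp_all add: cyc_succ_inj cyc_pred_inj)
  ultimately have "cyc_succ n x = cyc_pred n y" "cyc_pred n x = cyc_succ n y"
    by (simp_all add: cyc_nbrs_def)
  then have "cyc_succ n (cyc_succ n x) = y" "cyc_succ n (cyc_succ n y) = x"
    by (simp_all add: cyc_succ_pred assms(2,3) flip: \<open>cyc_pred n x = cyc_succ n y\<close>)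
  with cyc_succ_4_neq[OF assms(1,2)] show False by simp
qed

lemma wheel_V_eq: "wheel_V n = set [0..<Suc n]"
  by (auto simp: wheel_V_def)

lemma wheel_E_rim:
  assumes "n \<ge> 3" "i < n" "j < n"
  shows "wheel_E n i j \<longleftrightarrow> j = cyc_succ n i \<or> j = cyc_pred n i"
proof -
  have "(i + 1) mod n = cyc_succ n i" "(j + 1) mod n = cyc_succ n j"
    using assms by (auto simp: cyc_succ_def)
  then show ?thesis using assms by (auto simp: wheel_E_def cyc_succ_def cyc_pred_def)
qed

lemma wheel_E_from_rim:
  assumes "n \<ge> 3" "x < n" "z \<le> n"
  shows "wheel_E n x z \<longleftrightarrow> z = n \<or> z \<in> cyc_nbrs n x"
proof (cases "z = n")
  case False
  with assms show ?thesis by (simp add: wheel_E_rim cyc_nbrs_def)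
qed (use assms in \<open>simp add: wheel_E_def\<close>)

lemma wheel_E_from_hub: "z \<le> n \<Longrightarrow> wheel_E n n z \<longleftrightarrow> z < n"
  by (auto simp: wheel_E_def)

lemma diam_le_2_wheel:
  assumes "n \<ge> 3"
  shows "diam_le_2 (wheel_V n) (wheel_E n)"
  unfolding diam_le_2_def
proof (intro ballI impI)
  fix x y assume "x \<in> wheel_V n" "y \<in> wheel_V n" "x \<noteq> y" "\<not> wheel_E n x y"
  then have "x < n" "y < n" using assms by (auto simp: wheel_V_def wheel_E_def)
  then show "\<exists>z\<in>wheel_V n. wheel_E n x z \<and> wheel_E n z y"
    by (intro bexI[of _ n]) (auto simp: wheel_E_def wheel_V_def)
qed

lemma Rk_wheel_hub:
  assumes "k \<ge> 1" "n \<ge> 3" "y < n"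
  shows "Rk k (wheel_V n) (wheel_E n) n y = insert n ({..<n} - cyc_nbrs n y)"
proof -
  have "{z \<in> wheel_V n. wheel_E n n z \<noteq> wheel_E n y z} = insert n ({..<n} - cyc_nbrs n y)"
    using assms(2,3) by (auto simp: wheel_V_def wheel_E_from_rim wheel_E_from_hub)
  with self_notin_cyc_nbrs[OF assms(2,3)] show ?thesis
    using Rk_diam_le_2[OF assms(1) diam_le_2_wheel[OF assms(2)], of n y] assms(3)
    by (auto simp: wheel_V_def)
qed

lemma Rk_wheel_rim:
  assumes "k \<ge> 1" "n \<ge> 3" "x < n" "y < n" "x \<noteq> y"
  shows "Rk k (wheel_V n) (wheel_E n) x y =
    {x, y} \<union> {z. z < n \<and> (z \<in> cyc_nbrs n x) \<noteq> (z \<in> cyc_nbrs n y)}"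
proof -
  have "{z \<in> wheel_V n. wheel_E n x z \<noteq> wheel_E n y z} =
      {z. z < n \<and> (z \<in> cyc_nbrs n x) \<noteq> (z \<in> cyc_nbrs n y)}"
    using assms(2-4) by (auto simp: wheel_V_def wheel_E_from_rim)
  then show ?thesis
    using Rk_diam_le_2[OF assms(1) diam_le_2_wheel[OF assms(2)], of x y] assms(3-5)
    by (simp add: wheel_V_def)
qed

lemma card_Rk_wheel_adjacent:
  assumes k: "k \<ge> 1" and n: "n \<ge> 4" and x: "x < n"
  shows "4 \<le> card (Rk k (wheel_V n) (wheel_E n) x (cyc_succ n x) \<inter> {..<n})"
proof -
  let ?xs = "[cyc_pred n x, x, cyc_succ n x, cyc_succ n (cyc_succ n x)]"
  have n3: "n \<ge> 3" using n by simp
  have succ: "cyc_succ n x < n" "x \<noteq> cyc_succ n x"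
    using n x cyc_succ_lt cyc_succ_neq[of n x] by auto
  have "distinct ?xs"
    using n x by (auto simp: cyc_succ_def cyc_pred_def)
  moreover have "set ?xs \<subseteq> Rk k (wheel_V n) (wheel_E n) x (cyc_succ n x) \<inter> {..<n}"
    unfolding Rk_wheel_rim[OF k n3 x succ] using calculation n x succ cyc_succ_lt cyc_pred_lt
    by (auto simp: cyc_nbrs_def cyc_pred_succ)
  ultimately have "length ?xs \<le> card (Rk k (wheel_V n) (wheel_E n) x (cyc_succ n x) \<inter> {..<n})"
    by (intro distinct_length_le_card) simp_all
  then show ?thesis by simp
qed

lemma card_Rk_wheel_rim:
  assumes k: "k \<ge> 1" and n: "n \<ge> 5" and xy: "x < n" "y < n" "x \<noteq> y"
  shows "4 \<le> card (Rk k (wheel_V n) (wheel_E n) x y \<inter> {..<n})"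
proof -
  have n3: "n \<ge> 3" "n \<ge> 4" using n by simp_all
  have "y = cyc_pred n x \<Longrightarrow> x = cyc_succ n y" "x = cyc_pred n y \<Longrightarrow> y = cyc_succ n x"
    using cyc_succ_pred[OF xy(1)] cyc_succ_pred[OF xy(2)] by auto
  then consider "y = cyc_succ n x" | "x = cyc_succ n y" | "y \<notin> cyc_nbrs n x" "x \<notin> cyc_nbrs n y"
    unfolding cyc_nbrs_def by blast
  then show ?thesis
  proof cases
    case 1
    with card_Rk_wheel_adjacent[OF k n3(2) xy(1)] show ?thesis by simp
  next
    case 2
    with card_Rk_wheel_adjacent[OF k n3(2) xy(2)] show ?thesis by (simp add: Rk_commute)
  next
    case 3
    obtain a where a: "a \<in> cyc_nbrs n x" "a \<notin> cyc_nbrs n y"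
      using cyc_nbrs_not_subset[OF n xy] by blast
    obtain b where b: "b \<in> cyc_nbrs n y" "b \<notin> cyc_nbrs n x"
      using cyc_nbrs_not_subset[OF n xy(2,1)] xy(3) by blast
    have "distinct [x, y, a, b]"
      using 3 a b self_notin_cyc_nbrs[OF n3(1) xy(1)] self_notin_cyc_nbrs[OF n3(1) xy(2)] xy(3) by auto
    moreover have "set [x, y, a, b] \<subseteq> Rk k (wheel_V n) (wheel_E n) x y \<inter> {..<n}"
      using a b xy cyc_nbrs_lt[OF xy(1) a(1)] cyc_nbrs_lt[OF xy(2) b(1)]
      by (simp add: Rk_wheel_rim[OF k n3(1) xy])
    ultimately have "length [x, y, a, b] \<le> card (Rk k (wheel_V n) (wheel_E n) x y \<inter> {..<n})"
      by (intro distinct_length_le_card) simp_all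
    then show ?thesis by simp
  qed
qed


lemma card_Rk_wheel_hub:
  assumes k: "k \<ge> 1" and n: "n \<ge> 3" and y: "y < n"
  shows "n - 2 \<le> card (Rk k (wheel_V n) (wheel_E n) n y \<inter> {..<n})"
proof -
  have "card (cyc_nbrs n y) \<le> 2" by (simp add: cyc_nbrs_def card_insert_if)
  then have "n - 2 \<le> card ({..<n} - cyc_nbrs n y)"
    using diff_card_le_card_Diff[of "cyc_nbrs n y" "{..<n}"] by (simp add: cyc_nbrs_def)
  also have "{..<n} - cyc_nbrs n y = Rk k (wheel_V n) (wheel_E n) n y \<inter> {..<n}"
    by (auto simp: Rk_wheel_hub[OF k n y])
  finally show ?thesis .
qed

lemma trunc_resolving_fn_wheel_rim:
  assumes k: "k \<ge> 1" and n: "n \<ge> 6"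
  shows "trunc_resolving_fn k (wheel_V n) (wheel_E n) (\<lambda>z. if z \<in> {..<n} then 1 / 4 else 0)"
proof (rule trunc_resolving_fn_uniform)
  fix x y assume xy: "x \<in> wheel_V n" "y \<in> wheel_V n" "x \<noteq> y"
  have n3: "n \<ge> 3" "n \<ge> 5" using n by simp_all
  consider "x = n" "y < n" | "y = n" "x < n" | "x < n" "y < n"
    using xy by (fastforce simp: wheel_V_def)
  then show "4 \<le> real (card (Rk k (wheel_V n) (wheel_E n) x y \<inter> {..<n}))"
  proof cases
    case 1
    with card_Rk_wheel_hub[OF k n3(1) 1(2)] n show ?thesis by simp
  next
    case 2
    with card_Rk_wheel_hub[OF k n3(1) 2(2)] n show ?thesis by (simp add: Rk_commute)
  next
    case 3
    with card_Rk_wheel_rim[OF k n3(2)] xy(3) show ?thesis by simp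
  qed
qed (auto simp: wheel_V_def)

lemma Rk_wheel_consecutive:
  assumes "k \<ge> 1" "n \<ge> 3" "x < n"
  shows "Rk k (wheel_V n) (wheel_E n) x (cyc_succ n x) \<subseteq>
    {cyc_pred n x, x, cyc_succ n x, cyc_succ n (cyc_succ n x)}"
proof -
  have succ: "cyc_succ n x < n" "x \<noteq> cyc_succ n x"
    using assms(2,3) cyc_succ_lt cyc_succ_neq[of n x] by auto
  show ?thesis
    unfolding Rk_wheel_rim[OF assms succ] by (auto simp: cyc_nbrs_def cyc_pred_succ[OF assms(3)])
qed

lemma frac_tdim_wheel_lower:
  assumes k: "k \<ge> 1" and n: "n \<ge> 3" and h: "trunc_resolving_fn k (wheel_V n) (wheel_E n) h"
  shows "real n / 4 \<le> sum h (wheel_V n)"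
proof -
  define P where "P = (\<lambda>i. (i, cyc_succ n i)) ` {..<n}"
  define Q where "Q u v = {cyc_pred n u, u, v, cyc_succ n v}" for u v
  have "real (\<Sum>p\<in>P. 1) \<le> real 4 * sum h (wheel_V n)"
  proof (rule trunc_resolving_fn_double_counting[OF h])
    show "finite (wheel_V n)" "finite P" by (simp_all add: wheel_V_def P_def)
    show "x \<in> wheel_V n \<and> y \<in> wheel_V n \<and> x \<noteq> y" if "(x, y) \<in> P" for x y
    proof -
      from that have "x < n" "y = cyc_succ n x" by (auto simp: P_def)
      with n cyc_succ_lt[of x n] cyc_succ_neq[of n x] show ?thesis by (auto simp: wheel_V_def)
    qed
    show "Rk k (wheel_V n) (wheel_E n) x y \<subseteq> Q x y" if "(x, y) \<in> P" for x y
      using that Rk_wheel_consecutive[OF k n] by (auto simp: P_def Q_def)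
    show "(\<Sum>p\<in>{p \<in> P. z \<in> Q (fst p) (snd p)}. 1) \<le> (4::nat)" for z
    proof -
      let ?I = "[cyc_succ n z, z, cyc_pred n z, cyc_pred n (cyc_pred n z)]"
      have "{p \<in> P. z \<in> Q (fst p) (snd p)} \<subseteq> set (map (\<lambda>i. (i, cyc_succ n i)) ?I)"
        by (auto simp: P_def Q_def cyc_succ_pred cyc_pred_succ cyc_succ_lt)
      from card_mono[OF _ this] have "card {p \<in> P. z \<in> Q (fst p) (snd p)} \<le> 4"
        using card_length[of "map (\<lambda>i. (i, cyc_succ n i)) ?I"] by simp
      then show ?thesis by simp
    qed
  qed
  moreover have "card P = n" by (simp add: P_def card_image inj_on_def)
  ultimately show ?thesis by simp
qed

lemma frac_tdim_wheel_ge_6: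
  assumes "k \<ge> 1" "n \<ge> 6"
  shows "frac_tdim k (wheel_V n) (wheel_E n) = real n / 4"
proof (rule frac_tdim_eqI)
  show "trunc_resolving_fn k (wheel_V n) (wheel_E n) (\<lambda>z. if z \<in> {..<n} then 1 / 4 else 0)"
    using assms by (rule trunc_resolving_fn_wheel_rim)
  show "(\<Sum>z\<in>wheel_V n. if z \<in> {..<n} then 1 / 4 else 0) = real n / 4"
    by (subst sum_uniform_weight) (auto simp: wheel_V_def)
  show "real n / 4 \<le> sum h (wheel_V n)" if "trunc_resolving_fn k (wheel_V n) (wheel_E n) h" for h
    using assms that by (intro frac_tdim_wheel_lower) simp_all
qed

lemma frac_tdim_wheel_3:
  assumes "k \<ge> 1"
  shows "frac_tdim k (wheel_V 3) (wheel_E 3) = 2"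
proof -
  have "frac_tdim k (wheel_V 3) (wheel_E 3) = card (wheel_V 3) / real 2"
    using diam_le_2_wheel[of 3] unfolding wheel_V_eq
    by (rule frac_tdim_diam_le_2_certificate[OF assms _, where ps = "[(0, 1), (2, 3)]"
          and w = "\<lambda>_. 1" and m = 1]; code_simp)
  then show ?thesis by (simp add: wheel_V_def)
qed

lemma frac_tdim_wheel_4:
  assumes "k \<ge> 1"
  shows "frac_tdim k (wheel_V 4) (wheel_E 4) = 2"
proof -
  have "frac_tdim k (wheel_V 4) (wheel_E 4) = card (set [0..<4::nat]) / real 2"
    using diam_le_2_wheel[of 4] unfolding wheel_V_eq
    by (rule frac_tdim_diam_le_2_certificate[OF assms _, where ps = "[(0, 2), (1, 3)]"
          and w = "\<lambda>_. 1" and m = 1]; code_simp)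
  then show ?thesis by simp
qed

lemma frac_tdim_wheel_5:
  assumes "k \<ge> 1"
  shows "frac_tdim k (wheel_V 5) (wheel_E 5) = 3 / 2"
proof -
  \<comment> \<open>dual weights 1 on each rim edge and 2 on each spoke put total weight 10 on every vertex\<close>
  have "frac_tdim k (wheel_V 5) (wheel_E 5) = card (wheel_V 5) / real 4"
    using diam_le_2_wheel[of 5] unfolding wheel_V_eq
    by (rule frac_tdim_diam_le_2_certificate[OF assms _,
          where ps = "[(0, 1), (1, 2), (2, 3), (3, 4), (4, 0), (5, 0), (5, 1), (5, 2), (5, 3), (5, 4)]"
          and w = "\<lambda>(x, y). if x = 5 then 2 else 1" and m = 10]; code_simp)
  then show ?thesis by (simp add: wheel_V_def)
qed

lemma frac_tdim_wheel:
  assumes "k \<ge> 1" "n \<ge> 3"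
  shows "frac_tdim k (wheel_V n) (wheel_E n) =
    (if n \<in> {3, 4} then 2 else if n = 5 then 3 / 2 else real n / 4)"
proof -
  consider "n = 3" | "n = 4" | "n = 5" | "n \<ge> 6" using assms(2) by linarith
  then show ?thesis
    by cases (simp_all add: frac_tdim_wheel_3[OF assms(1)] frac_tdim_wheel_4[OF assms(1)]
        frac_tdim_wheel_5[OF assms(1)] frac_tdim_wheel_ge_6[OF assms(1)])
qed

lemma cmp_V_Sigma: "cmp_V m a = Sigma {..<m} (\<lambda>i. {..<a i})"
  by (auto simp: cmp_V_def)

lemma finite_cmp_V: "finite (cmp_V m a)" and card_cmp_V: "card (cmp_V m a) = (\<Sum>i<m. a i)"
  by (simp_all add: cmp_V_Sigma card_SigmaI)

lemma diam_le_2_cmp: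
  assumes "m \<ge> 2" "\<forall>i<m. a i \<ge> 1"
  shows "diam_le_2 (cmp_V m a) (cmp_E m a)"
  unfolding diam_le_2_def
proof (intro ballI impI)
  fix u v assume uv: "u \<in> cmp_V m a" "v \<in> cmp_V m a" "\<not> cmp_E m a u v"
  \<comment> \<open>\<open>u\<close> and \<open>v\<close> lie in a common part; any vertex of another part is a common neighbour\<close>
  define j where "j = (if fst u = 0 then 1 else 0 :: nat)"
  have "(j, 0) \<in> cmp_V m a"
    using assms(1) assms(2)[rule_format, of j] by (auto simp: cmp_V_def j_def split: if_splits)
  with uv show "\<exists>z\<in>cmp_V m a. cmp_E m a u z \<and> cmp_E m a z v"
    by (intro bexI[of _ "(j, 0)"]) (auto simp: cmp_E_def j_def)
qed

lemma Rk_cmp: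
  assumes "k \<ge> 1" "m \<ge> 2" "\<forall>i<m. a i \<ge> 1" "u \<in> cmp_V m a" "v \<in> cmp_V m a" "u \<noteq> v"
  shows "Rk k (cmp_V m a) (cmp_E m a) u v =
    {u, v} \<union> {z \<in> cmp_V m a. (fst z = fst u) \<noteq> (fst z = fst v)}"
proof -
  have "{z \<in> cmp_V m a. cmp_E m a u z \<noteq> cmp_E m a v z} =
      {z \<in> cmp_V m a. (fst z = fst u) \<noteq> (fst z = fst v)}"
    by (rule Collect_cong) (use assms(4,5) in \<open>auto simp: cmp_E_def\<close>)
  then show ?thesis by (simp add: Rk_diam_le_2[OF assms(1) diam_le_2_cmp[OF assms(2,3)] assms(4-6)])
qed

lemma Rk_cmp_twins:
  assumes "k \<ge> 1" "m \<ge> 2" "\<forall>i<m. a i \<ge> 1" "u \<in> cmp_V m a" "v \<in> cmp_V m a" "u \<noteq> v"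
    and "fst u = fst v \<or> a (fst u) = 1 \<and> a (fst v) = 1"
  shows "Rk k (cmp_V m a) (cmp_E m a) u v = {u, v}"
proof -
  have "z \<in> {u, v}" if "z \<in> cmp_V m a" "(fst z = fst u) \<noteq> (fst z = fst v)" for z
    using assms(4,5,7) that by (cases u; cases v; cases z) (auto simp: cmp_V_def)
  then show ?thesis by (auto simp: Rk_cmp[OF assms(1-6)])
qed

lemma trunc_resolving_fn_cmp_twins:
  assumes "k \<ge> 1" "m \<ge> 2" "\<forall>i<m. a i \<ge> 1" and h: "trunc_resolving_fn k (cmp_V m a) (cmp_E m a) h"
    and uv: "u \<in> cmp_V m a" "v \<in> cmp_V m a" "u \<noteq> v" "fst u = fst v \<or> a (fst u) = 1 \<and> a (fst v) = 1"
  shows "1 \<le> h u + h v"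
  using trunc_resolving_fn_twins[OF h uv(1-3)] Rk_cmp_twins[OF assms(1-3) uv] by simp

lemma frac_tdim_cmp_lower:
  fixes h :: "nat \<times> nat \<Rightarrow> real"
  assumes k: "k \<ge> 1" and m: "m \<ge> 2" and a: "\<forall>i<m. a i \<ge> 1"
    and h: "trunc_resolving_fn k (cmp_V m a) (cmp_E m a) h"
  shows "(if card {i. i < m \<and> a i = 1} = 1 then (real (\<Sum>i<m. a i) - 1) / 2
      else real (\<Sum>i<m. a i) / 2) \<le> sum h (cmp_V m a)"
proof -
  define I1 where "I1 = {i. i < m \<and> a i = 1}"
  define I2 where "I2 = {i. i < m \<and> a i \<noteq> 1}"
  have split_parts: "{..<m} = I1 \<union> I2" "I1 \<inter> I2 = {}" and finite_I: "finite I1" "finite I2"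
    by (auto simp: I1_def I2_def)
  note twins = trunc_resolving_fn_cmp_twins[OF k m a h]
  have parts: "real (a i) / 2 \<le> (\<Sum>j<a i. h (i, j))" if i: "i \<in> I2" for i
    using sum_ge_half_card_if_pairwise[of "{..<a i}" "\<lambda>j. h (i, j)"] i
    by (simp add: I2_def twins cmp_V_def)
  have singles: "(if card I1 = 1 then 0 else real (card I1) / 2) \<le> (\<Sum>i\<in>I1. h (i, 0))"
  proof (cases "card I1 = 1")
    case True
    have "0 \<le> h (i, 0)" if "i \<in> I1" for i
      using that trunc_resolving_fn_nonneg[OF h] by (simp add: I1_def cmp_V_def)
    with True show ?thesis by (simp add: sum_nonneg)
  next
    case False
    with finite_I(1) have "card I1 / 2 \<le> (\<Sum>i\<in>I1. h (i, 0))"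
      by (rule sum_ge_half_card_if_pairwise) (simp add: I1_def twins cmp_V_def)
    with False show ?thesis by simp
  qed
  have "sum h (cmp_V m a) = (\<Sum>i<m. \<Sum>j<a i. h (i, j))"
    by (simp add: cmp_V_Sigma sum.Sigma)
  also have "\<dots> = (\<Sum>i\<in>I1. h (i, 0)) + (\<Sum>i\<in>I2. \<Sum>j<a i. h (i, j))"
    by (simp add: split_parts finite_I sum.union_disjoint) (simp add: I1_def)
  finally have "sum h (cmp_V m a) = (\<Sum>i\<in>I1. h (i, 0)) + (\<Sum>i\<in>I2. \<Sum>j<a i. h (i, j))" .
  moreover have "real (\<Sum>i<m. a i) = card I1 + (\<Sum>i\<in>I2. real (a i))"
    by (simp add: split_parts finite_I sum.union_disjoint) (simp add: I1_def)
  moreover have "(\<Sum>i\<in>I2. real (a i)) / 2 \<le> (\<Sum>i\<in>I2. \<Sum>j<a i. h (i, j))"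
    using parts by (simp add: sum_divide_distrib sum_mono)
  ultimately have "(if card I1 = 1 then (real (\<Sum>i<m. a i) - 1) / 2 else real (\<Sum>i<m. a i) / 2)
      \<le> sum h (cmp_V m a)"
    using singles by (simp split: if_splits)
  then show ?thesis by (simp only: I1_def)
qed

lemma trunc_resolving_fn_cmp_unique_singleton:
  assumes k: "k \<ge> 1" and m: "m \<ge> 2" and a: "\<forall>i<m. a i \<ge> 1"
    and i0: "\<And>i. i < m \<and> a i = 1 \<longleftrightarrow> i = i0"
  shows "trunc_resolving_fn k (cmp_V m a) (cmp_E m a) (\<lambda>z. if z \<in> cmp_V m a - {(i0, 0)} then 1 / 2 else 0)"
proof (rule trunc_resolving_fn_uniform)
  let ?S = "cmp_V m a - {(i0, 0)}"
  have finite_Rk: "finite (Rk k (cmp_V m a) (cmp_E m a) u v \<inter> ?S)" for u v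
    using finite_subset[OF Rk_subset finite_cmp_V] by simp
  \<comment> \<open>the vertex of the unique singleton part is separated from \<open>v\<close> by the whole part of \<open>v\<close>\<close>
  have v0: "(i0, 0) \<in> cmp_V m a" using i0[of i0] by (simp add: cmp_V_def)
  have partner: "2 \<le> card (Rk k (cmp_V m a) (cmp_E m a) (i0, 0) v \<inter> ?S)"
    if v: "v \<in> cmp_V m a" "v \<noteq> (i0, 0)" for v
  proof -
    obtain j q where v_eq: "v = (j, q)" by fastforce
    with v(1) have "j < m" "q < a j" by (simp_all add: cmp_V_def)
    with v(2) i0[of i0] have "j \<noteq> i0" by (auto simp: v_eq)
    with \<open>j < m\<close> a i0[of j] have "a j \<ge> 2" by fastforce
    with \<open>j < m\<close> \<open>j \<noteq> i0\<close> have "{(j, 0), (j, 1)} \<subseteq> Rk k (cmp_V m a) (cmp_E m a) (i0, 0) v \<inter> ?S"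
      unfolding Rk_cmp[OF k m a v0 v(1) v(2)[symmetric]] by (simp add: cmp_V_def v_eq)
    with finite_Rk show ?thesis by (rule two_le_card) simp
  qed
  fix u v assume uv: "u \<in> cmp_V m a" "v \<in> cmp_V m a" "u \<noteq> v"
  consider "u = (i0, 0)" | "v = (i0, 0)" | "u \<noteq> (i0, 0)" "v \<noteq> (i0, 0)" by blast
  then show "2 \<le> real (card (Rk k (cmp_V m a) (cmp_E m a) u v \<inter> ?S))"
  proof cases
    case 1
    with uv partner[of v] show ?thesis by simp
  next
    case 2
    with uv partner[of u] show ?thesis by (simp add: Rk_commute)
  next
    case 3
    with uv endpoints_mem_Rk[OF uv, of k "cmp_E m a"] have "{u, v} \<subseteq> Rk k (cmp_V m a) (cmp_E m a) u v \<inter> ?S"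
      by simp
    from two_le_card[OF finite_Rk this uv(3)] show ?thesis by simp
  qed
qed (use finite_cmp_V in auto)

lemma frac_tdim_cmp:
  assumes k: "k \<ge> 1" and m: "m \<ge> 2" and a: "\<forall>i<m. a i \<ge> 1"
  shows "frac_tdim k (cmp_V m a) (cmp_E m a) =
    (if card {i. i < m \<and> a i = 1} = 1 then (real (\<Sum>i<m. a i) - 1) / 2 else real (\<Sum>i<m. a i) / 2)"
    (is "_ = ?d")
proof (cases "card {i. i < m \<and> a i = 1} = 1")
  case False
  with finite_cmp_V show ?thesis
    by (intro frac_tdim_eqI[OF trunc_resolving_fn_half _ frac_tdim_cmp_lower[OF k m a]])
      (simp_all add: sum_uniform_weight card_cmp_V)
next
  case True
  then obtain i0 where "{i. i < m \<and> a i = 1} = {i0}" by (meson card_1_singletonE)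
  then have i0: "i < m \<and> a i = 1 \<longleftrightarrow> i = i0" for i by blast
  have v0: "(i0, 0) \<in> cmp_V m a" using i0[of i0] by (simp add: cmp_V_def)
  moreover have "card (cmp_V m a) \<ge> 1"
    using v0 finite_cmp_V by (metis One_nat_def Suc_leI card_gt_0_iff empty_iff)
  ultimately have "card (cmp_V m a - {(i0, 0)}) = real (\<Sum>i<m. a i) - 1"
    using finite_cmp_V by (simp add: of_nat_diff card_cmp_V)
  moreover have "(\<Sum>z\<in>cmp_V m a. if z \<in> cmp_V m a - {(i0, 0)} then 1 / 2 else 0) =
      card (cmp_V m a - {(i0, 0)}) / (2::real)"
    by (rule sum_uniform_weight[OF finite_cmp_V Diff_subset])
  ultimately show ?thesis
    using True frac_tdim_eqI[OF trunc_resolving_fn_cmp_unique_singleton[OF k m a i0] _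
        frac_tdim_cmp_lower[OF k m a]] by simp
qed

theorem corollary3p2:
  fixes k :: nat
  assumes "k \<ge> 1"
  shows "frac_tdim k petersen_V petersen_E = 5 / 3
    \<and> (\<forall>n::nat. n \<ge> 3 \<longrightarrow>
          frac_tdim k (wheel_V n) (wheel_E n) =
            (if n \<in> {3, 4} then 2 else if n = 5 then 3 / 2 else real n / 4))
    \<and> (\<forall>(m::nat) (a::nat \<Rightarrow> nat). m \<ge> 2 \<longrightarrow> (\<forall>i<m. a i \<ge> 1) \<longrightarrow>
          (let n = (\<Sum>i<m. a i); s = card {i. i < m \<and> a i = 1} in
           frac_tdim k (cmp_V m a) (cmp_E m a) =
             (if s = 1 then (real n - 1) / 2 else real n / 2)))"
  using frac_tdim_petersen[OF assms] frac_tdim_wheel[OF assms] frac_tdim_cmp[OF assms]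
  by (simp add: Let_def)

end
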